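(* Let $\Gamma$ be a round sphere of diameter $D$ in some Euclidean space $\mathbb{R}^n$, and let $B$ be the closed ball bounded by $\Gamma$. Let $\Pi$ be a hyperplane that intersects $B$ but does not contain the center of $B$. Let $\gamma=\Pi\cap B$, let $d$ be the diameter of $\gamma$, and let $\gamma^*$ be the smaller of the two spherical caps of $\Gamma$ bounded by $\Pi\cap\Gamma$. Let $p^*\in\gamma^*$, and let $p\in\gamma$ be the point such that the line through $p$ and $p^*$ contains the center of $B$. Then $\|p-p^*\|\le\chi(D,d)$, where $\chi(D,d)=\frac{d^2}{4D}+\frac{d^4}{2D^3}$. *)

theory Defs
  imports "HOL-Analysis.Analysis"
begin

definition chi :: "real \<Rightarrow> real \<Rightarrow> real" where
  "chi D d = d^2 / (4 * D) + d^4 / (2 * D^3)"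

end

theory Submission
  imports Defs
begin

text \<open>
  Write \<open>R = D/2\<close> and let \<open>h\<close> be the distance from the centre to the hyperplane.
  The segment from \<open>p\<close> to \<open>p\<^sup>*\<close> lies on a ray from the centre, between the hyperplane and
  the sphere, so it is at most as long as the height \<open>R - h\<close> of the cap.  The slice
  contains a chord of length \<open>2 sqrt (R\<^sup>2 - h\<^sup>2)\<close>, and since \<open>\<chi>\<close> is monotone in \<open>d\<close> it
  remains to check the one-variable inequality \<open>R - h \<le> \<chi>(2R, 2 sqrt (R\<^sup>2 - h\<^sup>2))\<close>, which
  follows from \<open>R - h = (R\<^sup>2 - h\<^sup>2) / (R + h)\<close>.
\<close>

lemma chi_mono:
  assumes "D > 0" "0 \<le> d" "d \<le> d'"
  shows "chi D d \<le> chi D d'"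
proof -
  have "d^2 \<le> d'^2" "d^4 \<le> d'^4" using assms by (auto intro: power_mono)
  then show ?thesis unfolding chi_def using assms by (intro add_mono divide_right_mono) auto
qed

lemma cap_height_le_chi:
  fixes R h :: real
  assumes R: "R > 0" and h: "0 \<le> h" "h \<le> R"
  shows "R - h \<le> chi (2*R) (2 * sqrt (R^2 - h^2))"
proof -
  have r2: "(sqrt (R^2 - h^2))^2 = R^2 - h^2"
    using h by (simp add: power_mono)
  have chi_eq: "chi (2*R) (2 * sqrt (R^2 - h^2)) = (R^2 - h^2) / (2*R) + (R^2 - h^2)^2 / R^3"
    unfolding chi_def power_mult_distrib r2 using R
    by (simp add: power4_eq_xxxx power2_eq_square power3_eq_cube field_simps)
  have "R^2 \<le> (R + h)^2" using assms by (intro power_mono) auto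
  then have "R^2 \<le> 2 * (R + h)^2" using zero_le_power2[of "R + h"] by linarith
  then have "(R - h)^2 * R^2 \<le> (R - h)^2 * (2 * (R + h)^2)"
    by (intro mult_left_mono) auto
  then have "2 * R^3 * (R - h) \<le> R^2 * (R^2 - h^2) + 2 * (R^2 - h^2)^2"
    by (simp add: power2_eq_square power3_eq_cube algebra_simps)
  then have "R - h \<le> (R^2 * (R^2 - h^2) + 2 * (R^2 - h^2)^2) / (2 * R^3)"
    using R by (simp add: pos_le_divide_eq mult.commute)
  also have "\<dots> = (R^2 - h^2) / (2*R) + (R^2 - h^2)^2 / R^3"
    using R by (simp add: field_simps power3_eq_cube power2_eq_square)
  finally show ?thesis unfolding chi_eq .
qed

text \<open>
  The cap estimate along the line through the centre: \<open>a = u \<bullet> c - t\<close>,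
  \<open>b = u \<bullet> (p\<^sup>* - c)\<close>, \<open>K = \<parallel>u\<parallel> R\<close> and \<open>p = c + s (p\<^sup>* - c)\<close>.
\<close>
lemma abs_param_sub_one_le:
  fixes a b s K :: real
  assumes "a \<noteq> 0" "(b + a) * a \<le> 0" "s * b = - a" "\<bar>b\<bar> \<le> K"
  shows "\<bar>s - 1\<bar> * K \<le> K - \<bar>a\<bar>"
proof -
  have "a^2 > 0" using assms(1) by simp
  moreover have ab: "a * b \<le> - (a^2)" using assms(2) by (simp add: algebra_simps power2_eq_square)
  ultimately have "a * b < 0" by linarith
  then have "b \<noteq> 0" by auto
  have "\<bar>a\<bar> * \<bar>a\<bar> \<le> \<bar>a\<bar> * \<bar>b\<bar>"
    using ab \<open>a * b < 0\<close> by (simp add: abs_mult[symmetric] power2_eq_square)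
  then have "\<bar>a\<bar> \<le> \<bar>b\<bar>" using assms(1) by (subst (asm) mult_le_cancel_left_pos) auto
  have s: "s = \<bar>a\<bar> / \<bar>b\<bar>"
    using assms(3) \<open>a * b < 0\<close> \<open>b \<noteq> 0\<close>
    by (auto simp: field_simps abs_if mult_less_0_iff)
  have "0 < \<bar>b\<bar>" using \<open>b \<noteq> 0\<close> by simp
  then have "s \<le> 1" using \<open>\<bar>a\<bar> \<le> \<bar>b\<bar>\<close> unfolding s by simp
  then have "\<bar>s - 1\<bar> * K = K - \<bar>a\<bar> * (K / \<bar>b\<bar>)"
    unfolding s by (simp add: algebra_simps)
  also have "\<dots> \<le> K - \<bar>a\<bar>"
    using \<open>0 < \<bar>b\<bar>\<close> assms(4) by (simp add: le_divide_eq mult_left_mono)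
  finally show ?thesis .
qed

lemma abs_inner_sub_le_if_hyperplane_meets_cball:
  fixes u c :: "'a::real_inner"
  assumes "{x. u \<bullet> x = t} \<inter> cball c R \<noteq> {}"
  shows "\<bar>u \<bullet> c - t\<bar> \<le> norm u * R"
proof -
  obtain x where "x \<in> {x. u \<bullet> x = t} \<inter> cball c R" using assms by blast
  then have x: "u \<bullet> x = t" "dist c x \<le> R" by auto
  then have "\<bar>u \<bullet> c - t\<bar> = \<bar>u \<bullet> (c - x)\<bar>" by (simp add: inner_diff_right)
  also have "\<dots> \<le> norm u * norm (c - x)" by (rule Cauchy_Schwarz_ineq2)
  also have "\<dots> \<le> norm u * R" using x by (intro mult_left_mono) (auto simp: dist_norm)
  finally show ?thesis .
qed

lemma dist_hyperplane_sphere_on_ray_le: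
  fixes u c p q :: "'a::real_inner"
  assumes u: "u \<noteq> 0" and nocenter: "u \<bullet> c \<noteq> t"
    and q: "q \<in> sphere c R" and far_side: "(u \<bullet> q - t) * (u \<bullet> c - t) \<le> 0"
    and p: "u \<bullet> p = t" "p = c + s *\<^sub>R (q - c)"
  shows "dist p q \<le> R - \<bar>u \<bullet> c - t\<bar> / norm u"
proof -
  define a where "a = u \<bullet> c - t"
  define b where "b = u \<bullet> (q - c)"
  have nq: "norm (q - c) = R" using q by (simp add: dist_norm norm_minus_commute)
  have "(b + a) * a \<le> 0" using far_side unfolding a_def b_def by (simp add: inner_diff_right)
  moreover have "s * b = - a" using p unfolding a_def b_def by (simp add: inner_add_right)
  moreover have "\<bar>b\<bar> \<le> norm u * R" unfolding b_def nq[symmetric] by (rule Cauchy_Schwarz_ineq2)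
  ultimately have "\<bar>s - 1\<bar> * (norm u * R) \<le> norm u * R - \<bar>a\<bar>"
    using nocenter unfolding a_def by (intro abs_param_sub_one_le) auto
  moreover have "p - q = (s - 1) *\<^sub>R (q - c)" using p by (simp add: algebra_simps)
  then have "dist p q = \<bar>s - 1\<bar> * R" using nq by (simp add: dist_norm)
  ultimately show ?thesis using u unfolding a_def by (simp add: field_simps)
qed

lemma diameter_hyperplane_cball_ge:
  fixes u c :: "'a::euclidean_space"
  assumes dim: "DIM('a) \<ge> 2" and u: "u \<noteq> 0" and near: "\<bar>u \<bullet> c - t\<bar> \<le> norm u * R"
  shows "2 * sqrt (R^2 - (\<bar>u \<bullet> c - t\<bar> / norm u)^2)
           \<le> diameter ({x. u \<bullet> x = t} \<inter> cball c R)"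
proof -
  define h where "h = \<bar>u \<bullet> c - t\<bar> / norm u"
  define r where "r = sqrt (R^2 - h^2)"
  define q0 where "q0 = c - ((u \<bullet> c - t) / (norm u)^2) *\<^sub>R u"
  have h: "0 \<le> h" "h \<le> R" using u near unfolding h_def by (auto simp: field_simps)
  then have r: "0 \<le> r" "r^2 = R^2 - h^2" unfolding r_def by (auto simp: power_mono)
  obtain v0 where v0: "v0 \<noteq> 0" "orthogonal u v0" using orthogonal_to_vector_exists[OF dim] by blast
  define v where "v = v0 /\<^sub>R norm v0"
  have v: "norm v = 1" "orthogonal u v" using v0 unfolding v_def by (auto simp: orthogonal_clauses)
  have on_slice: "q0 + e *\<^sub>R v \<in> {x. u \<bullet> x = t} \<inter> cball c R" if e: "e^2 = r^2" for e
  proof -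
    have "u \<bullet> q0 = t" unfolding q0_def using u by (simp add: inner_diff_right dot_square_norm)
    then have "u \<bullet> (q0 + e *\<^sub>R v) = t" using v by (simp add: inner_add_right orthogonal_def)
    moreover have "(norm (q0 + e *\<^sub>R v - c))^2 = r^2 + h^2"
    proof -
      define w where "w = (- ((u \<bullet> c - t) / (norm u)^2)) *\<^sub>R u"
      have "orthogonal (e *\<^sub>R v) w"
        using v unfolding w_def by (auto simp: orthogonal_clauses orthogonal_commute)
      moreover have "q0 + e *\<^sub>R v - c = e *\<^sub>R v + w" unfolding q0_def w_def by simp
      ultimately have "(norm (q0 + e *\<^sub>R v - c))^2 = (norm (e *\<^sub>R v))^2 + (norm w)^2"
        by (metis norm_add_Pythagorean)
      also have "\<dots> = e^2 + (\<bar>u \<bullet> c - t\<bar> / norm u)^2"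
        using u v unfolding w_def by (simp add: power2_eq_square)
      finally show ?thesis using e unfolding h_def by linarith
    qed
    then have "norm (q0 + e *\<^sub>R v - c) = R"
      using r h by (simp add: power2_eq_iff_nonneg)
    ultimately show ?thesis by (simp add: dist_norm norm_minus_commute)
  qed
  have "2 * r = dist (q0 + r *\<^sub>R v) (q0 + (- r) *\<^sub>R v)"
    using v r by (simp add: dist_norm flip: scaleR_2 scaleR_add_left)
  also have "\<dots> \<le> diameter ({x. u \<bullet> x = t} \<inter> cball c R)"
    by (intro diameter_bounded_bound on_slice bounded_Int) auto
  finally show ?thesis unfolding r_def h_def .
qed

theorem lemma3p4:
  fixes c u p pstar :: "'a::euclidean_space" and D t :: real
  assumes dim: "DIM('a) \<ge> 2"
    and D: "D > 0"
    and u: "u \<noteq> 0"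
    and meets: "{x. u \<bullet> x = t} \<inter> cball c (D/2) \<noteq> {}"
    and nocenter: "u \<bullet> c \<noteq> t"
    and pstar: "pstar \<in> {x \<in> sphere c (D/2). (u \<bullet> x - t) * (u \<bullet> c - t) \<le> 0}"
    and p: "p \<in> {x. u \<bullet> x = t} \<inter> cball c (D/2)"
    and col: "\<exists>s::real. p = c + s *\<^sub>R (pstar - c)"
  shows "dist p pstar \<le> chi D (diameter ({x. u \<bullet> x = t} \<inter> cball c (D/2)))"
proof -
  define R where "R = D/2"
  define h where "h = \<bar>u \<bullet> c - t\<bar> / norm u"
  have near: "\<bar>u \<bullet> c - t\<bar> \<le> norm u * R"
    using meets unfolding R_def by (rule abs_inner_sub_le_if_hyperplane_meets_cball)
  then have h: "0 \<le> h" "h \<le> R" using u unfolding h_def by (auto simp: field_simps)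
  obtain s where "p = c + s *\<^sub>R (pstar - c)" using col by blast
  then have "dist p pstar \<le> R - h"
    using p pstar u nocenter unfolding h_def R_def by (intro dist_hyperplane_sphere_on_ray_le) auto
  also have "\<dots> \<le> chi D (2 * sqrt (R^2 - h^2))"
    using cap_height_le_chi[of R h] D h unfolding R_def by simp
  also have "\<dots> \<le> chi D (diameter ({x. u \<bullet> x = t} \<inter> cball c (D/2)))"
    using D h diameter_hyperplane_cball_ge[OF dim u near]
    unfolding R_def h_def by (intro chi_mono) auto
  finally show ?thesis .
qed

end
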